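(* Let $\mathcal{H}$ be a real Hilbert space, let $\ell\geq 0$, and let $f\colon \mathcal{H}\to\mathbb{R}$ be a convex and lower semicontinuous function. Then $f$ is $\ell$-Lipschitz if and only if $$\Vert x\Vert-\ell\leq \Vert \operatorname{prox}_f(x+y)-y\Vert \quad \text{for all } x,y\in\mathcal{H}.$$
   Context: For a proper convex lower semicontinuous $f$, $\operatorname{prox}_f(x)=\operatorname{argmin}_{u\in\mathcal{H}}\{f(u)+\tfrac12\Vert x-u\Vert^2\}$ (the minimizer exists and is unique). *)

theory Defs
  imports "HOL-Analysis.Analysis"
begin

definition lsc :: "('a::topological_space \<Rightarrow> real) \<Rightarrow> bool" where
  "lsc f \<longleftrightarrow> (\<forall>x c. c < f x \<longrightarrow> eventually (\<lambda>y. c < f y) (nhds x))"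

definition prox :: "('a::real_inner \<Rightarrow> real) \<Rightarrow> 'a \<Rightarrow> 'a" where
  "prox f x = (THE u. \<forall>v. f u + (1/2) * (norm (x - u))^2 \<le> f v + (1/2) * (norm (x - v))^2)"

end

theory Submission
  imports Defs
begin

text \<open>The point \<open>p = prox f z\<close> exists by strong convexity of the prox objective and
  completeness, and is characterised by \<open>z - p\<close> being a subgradient of \<open>f\<close> at \<open>p\<close>.
  An \<open>l\<close>-Lipschitz \<open>f\<close> has only subgradients of norm at most \<open>l\<close>, so the residual
  \<open>z - prox f z\<close> is bounded by \<open>l\<close>. Conversely, if all residuals are bounded by \<open>l\<close>, then
  the points \<open>prox (c f) a\<close> tend to \<open>a\<close> as \<open>c \<rightarrow> 0\<close> and carry subgradients of norm at
  most \<open>l\<close>; lower semicontinuity at \<open>a\<close> turns this into the Lipschitz bound. Finally, the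
  residual bound is equivalent to the stated inequality by the triangle inequality.\<close>

definition subgradient :: "('a::real_inner \<Rightarrow> real) \<Rightarrow> 'a \<Rightarrow> 'a \<Rightarrow> bool" where
  "subgradient f p g \<longleftrightarrow> (\<forall>v. f p + inner g (v - p) \<le> f v)"

definition prox_minimizer :: "('a::real_inner \<Rightarrow> real) \<Rightarrow> 'a \<Rightarrow> 'a \<Rightarrow> bool" where
  "prox_minimizer f x p \<longleftrightarrow>
     (\<forall>v. f p + (1/2) * (norm (x - p))\<^sup>2 \<le> f v + (1/2) * (norm (x - v))\<^sup>2)"

lemma lsc_cmul:
  assumes "lsc f" and "0 < c"
  shows "lsc (\<lambda>x. c * f x)"
  unfolding lsc_def
proof (intro allI impI)
  fix x d
  assume "d < c * f x"
  then have "d / c < f x"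
    using \<open>0 < c\<close> by (simp add: field_simps)
  then have "eventually (\<lambda>y. d / c < f y) (nhds x)"
    using \<open>lsc f\<close> unfolding lsc_def by blast
  then show "eventually (\<lambda>y. d < c * f y) (nhds x)"
    by (rule eventually_mono) (use \<open>0 < c\<close> in \<open>simp add: field_simps\<close>)
qed

lemma lsc_tendsto_le:
  assumes "lsc f" and "u \<longlonglongrightarrow> q" and "(\<lambda>n. f (u n)) \<longlonglongrightarrow> c"
  shows "f q \<le> c"
proof (rule ccontr)
  assume "\<not> f q \<le> c"
  then obtain d where "c < d" and "d < f q"
    using dense not_le by blast
  then have "eventually (\<lambda>y. d < f y) (nhds q)"
    using \<open>lsc f\<close> unfolding lsc_def by blast
  then have "eventually (\<lambda>n. d < f (u n)) sequentially"
    using \<open>u \<longlonglongrightarrow> q\<close> unfolding filterlim_iff by blast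
  moreover have "eventually (\<lambda>n. f (u n) < d) sequentially"
    using order_tendstoD(2)[OF assms(3) \<open>c < d\<close>] .
  ultimately have "eventually (\<lambda>n. False) sequentially"
    by eventually_elim auto
  then show False
    by simp
qed

text \<open>Convexity propagates the lower bound that lower semicontinuity gives near 0
  along every ray, with linear loss.\<close>
lemma convex_lsc_affine_minorant:
  fixes f :: "'a::real_normed_vector \<Rightarrow> real"
  assumes cvx: "convex_on UNIV f" and "lsc f"
  obtains A B where "0 \<le> B" and "\<And>u. A - B * norm u \<le> f u"
proof -
  have "eventually (\<lambda>y. f 0 - 1 < f y) (nhds 0)"
    using \<open>lsc f\<close> unfolding lsc_def by simp
  then obtain d where "0 < d" and d: "\<And>y. dist y 0 < d \<Longrightarrow> f 0 - 1 < f y"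
    by (auto simp: eventually_nhds_metric)
  have "f 0 - 1 - (2 / d) * norm u \<le> f u" for u
  proof (cases "norm u < d")
    case True
    moreover have "0 \<le> (2 / d) * norm u"
      using \<open>0 < d\<close> by simp
    ultimately show ?thesis
      using d[of u] by simp
  next
    case False
    define t where "t = d / (2 * norm u)"
    have "0 < norm u"
      using False \<open>0 < d\<close> by linarith
    then have t: "0 < t" "t \<le> 1" "norm (t *\<^sub>R u) < d" and inv_t: "1 / t = (2 / d) * norm u"
      using False \<open>0 < d\<close> by (auto simp: t_def field_simps)
    have "f 0 - 1 < f (t *\<^sub>R u)"
      using d t(3) by simp
    also have "\<dots> \<le> (1 - t) * f 0 + t * f u"
      using convex_onD[OF cvx, of t 0 u] t by simp
    finally have "f 0 - f u < 1 / t"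
      using t by (simp add: field_simps)
    then show ?thesis
      using inv_t by simp
  qed
  then show thesis
    using \<open>0 < d\<close> by (intro that[of "2 / d" "f 0 - 1"]) auto
qed

lemma power2_norm_diff:
  fixes a b :: "'a::real_inner"
  shows "(norm (a - b))\<^sup>2 = (norm a)\<^sup>2 - 2 * inner a b + (norm b)\<^sup>2"
  by (simp add: power2_norm_eq_inner inner_diff_left inner_diff_right inner_commute)

lemma norm_diff_midpoint_squared:
  fixes a x y :: "'a::real_inner"
  shows "(norm (a - (1/2) *\<^sub>R (x + y)))\<^sup>2
    = (1/2) * (norm (a - x))\<^sup>2 + (1/2) * (norm (a - y))\<^sup>2 - (1/4) * (norm (x - y))\<^sup>2"
  by (simp add: power2_norm_eq_inner inner_diff_left inner_diff_right inner_add_left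
      inner_add_right inner_commute algebra_simps)

text \<open>Strong convexity of the prox objective, from the parallelogram law at the midpoint.\<close>
lemma prox_objective_dist_le:
  fixes f :: "'a::real_inner \<Rightarrow> real"
  assumes cvx: "convex_on UNIV f" and m: "\<And>u. m \<le> f u + (1/2) * (norm (a - u))\<^sup>2"
  shows "(norm (x - y))\<^sup>2
    \<le> 4 * ((f x + (1/2) * (norm (a - x))\<^sup>2) + (f y + (1/2) * (norm (a - y))\<^sup>2) - 2 * m)"
proof -
  let ?w = "(1/2) *\<^sub>R (x + y)"
  have "f ?w \<le> (1/2) * f x + (1/2) * f y"
    using convex_onD[OF cvx, of "1/2" x y] by (simp add: scaleR_right_distrib)
  moreover have "m \<le> f ?w + (1/2) * (norm (a - ?w))\<^sup>2"
    by (rule m)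
  ultimately show ?thesis
    unfolding norm_diff_midpoint_squared by (simp add: field_simps)
qed

text \<open>A minimizing sequence is Cauchy by strong convexity; its limit is a minimizer
  because the quadratic term is continuous and \<open>f\<close> is lower semicontinuous.\<close>
lemma prox_minimizer_exists:
  fixes f :: "'a::{real_inner, complete_space} \<Rightarrow> real"
  assumes cvx: "convex_on UNIV f" and "lsc f"
  obtains p where "prox_minimizer f x p"
proof -
  define G where "G u = f u + (1/2) * (norm (x - u))\<^sup>2" for u
  obtain A B where "0 \<le> B" and AB: "\<And>u. A - B * norm u \<le> f u"
    using convex_lsc_affine_minorant[OF cvx \<open>lsc f\<close>] by blast
  have "A - B * norm x - (1/2) * B\<^sup>2 \<le> G u" for u
  proof -
    have "norm u \<le> norm x + norm (x - u)"
      using norm_triangle_ineq4[of x "x - u"] by simp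
    then have "B * norm u \<le> B * norm x + B * norm (x - u)"
      using \<open>0 \<le> B\<close> by (metis distrib_left mult_left_mono)
    moreover have "B * norm (x - u) \<le> (1/2) * B\<^sup>2 + (1/2) * (norm (x - u))\<^sup>2"
      using zero_le_power2[of "B - norm (x - u)"] by (simp add: power2_eq_square algebra_simps)
    ultimately show ?thesis
      using AB[of u] unfolding G_def by linarith
  qed
  then have "bdd_below (range G)"
    by (intro bdd_belowI2)
  define m where "m = Inf (range G)"
  have m_le: "m \<le> G u" for u
    unfolding m_def using \<open>bdd_below (range G)\<close> by (simp add: cInf_lower)
  have "\<exists>u. G u < m + inverse (real (Suc n))" for n
    using cInf_lessD[of "range G" "m + inverse (real (Suc n))"] unfolding m_def by auto
  then obtain u where u: "\<And>n. G (u n) < m + inverse (real (Suc n))"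
    by metis
  have G_u: "(\<lambda>n. G (u n)) \<longlonglongrightarrow> m"
    by (rule tendsto_sandwich[OF _ _ tendsto_const LIMSEQ_inverse_real_of_nat_add])
      (use m_le u in \<open>auto intro!: always_eventually less_imp_le\<close>)
  have "Cauchy u"
  proof (rule metric_CauchyI)
    fix e :: real
    assume "0 < e"
    then have "eventually (\<lambda>n. G (u n) < m + e\<^sup>2 / 8) sequentially"
      using G_u by (intro order_tendstoD) auto
    then obtain N where N: "\<And>n. N \<le> n \<Longrightarrow> G (u n) < m + e\<^sup>2 / 8"
      by (auto simp: eventually_sequentially)
    have "dist (u i) (u j) < e" if "N \<le> i" "N \<le> j" for i j
    proof -
      have "(dist (u i) (u j))\<^sup>2 \<le> 4 * (G (u i) + G (u j) - 2 * m)"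
        unfolding dist_norm G_def by (rule prox_objective_dist_le[OF cvx m_le[unfolded G_def]])
      also have "\<dots> < e\<^sup>2"
        using N[OF that(1)] N[OF that(2)] by (simp add: field_simps)
      finally show ?thesis
        using \<open>0 < e\<close> by (simp add: power_less_imp_less_base)
    qed
    then show "\<exists>M. \<forall>i\<ge>M. \<forall>j\<ge>M. dist (u i) (u j) < e"
      by blast
  qed
  then obtain p where "u \<longlonglongrightarrow> p"
    using Cauchy_convergent convergent_def by blast
  have "(\<lambda>n. G (u n) - (1/2) * (norm (x - u n))\<^sup>2) \<longlonglongrightarrow> m - (1/2) * (norm (x - p))\<^sup>2"
    by (intro tendsto_intros G_u \<open>u \<longlonglongrightarrow> p\<close>)
  then have "f p \<le> m - (1/2) * (norm (x - p))\<^sup>2"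
    by (intro lsc_tendsto_le[OF \<open>lsc f\<close> \<open>u \<longlonglongrightarrow> p\<close>]) (simp add: G_def)
  then have "G p \<le> G v" for v
    using m_le[of v] unfolding G_def by linarith
  then have "prox_minimizer f x p"
    unfolding prox_minimizer_def G_def by blast
  then show thesis
    by (rule that)
qed

text \<open>Compare \<open>p\<close> with the points \<open>(1 - t) p + t v\<close> and let \<open>t \<rightarrow> 0\<close>.\<close>
lemma prox_minimizer_imp_subgradient:
  fixes f :: "'a::real_inner \<Rightarrow> real"
  assumes cvx: "convex_on UNIV f" and min: "prox_minimizer f x p"
  shows "subgradient f p (x - p)"
  unfolding subgradient_def
proof
  fix v
  define D where "D = f p + inner (x - p) (v - p) - f v"
  define K where "K = (1/2) * (norm (v - p))\<^sup>2"
  have "D \<le> t * K" if "0 < t" "t < 1" for t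
  proof -
    let ?w = "(1 - t) *\<^sub>R p + t *\<^sub>R v"
    have conv: "f ?w \<le> (1 - t) * f p + t * f v"
      using convex_onD[OF cvx, of t p v] that by simp
    have opt: "f p + (1/2) * (norm (x - p))\<^sup>2 \<le> f ?w + (1/2) * (norm (x - ?w))\<^sup>2"
      using min unfolding prox_minimizer_def by blast
    have "x - ?w = (x - p) - t *\<^sub>R (v - p)"
      by (simp add: algebra_simps)
    then have nw: "(norm (x - ?w))\<^sup>2
        = (norm (x - p))\<^sup>2 - 2 * t * inner (x - p) (v - p) + t\<^sup>2 * (norm (v - p))\<^sup>2"
      by (simp only: power2_norm_diff[of "x - p"] norm_scaleR inner_scaleR_right power_mult_distrib
          power2_abs)
    have "t * D - t * (t * K)
        = (f p + (1/2) * (norm (x - p))\<^sup>2) - ((1 - t) * f p + t * f v + (1/2) * (norm (x - ?w))\<^sup>2)"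
      unfolding D_def K_def nw by (simp add: algebra_simps power2_eq_square)
    then have "t * D \<le> t * (t * K)"
      using conv opt by linarith
    then show ?thesis
      using that by simp
  qed
  then have "eventually (\<lambda>t. D \<le> t * K) (at_right 0)"
    unfolding eventually_at_right_field by (intro exI[of _ 1]) auto
  moreover have "((\<lambda>t. t * K) \<longlongrightarrow> 0 * K) (at_right 0)"
    by (intro tendsto_intros)
  ultimately have "D \<le> 0"
    by (intro tendsto_lowerbound) auto
  then show "f p + inner (x - p) (v - p) \<le> f v"
    unfolding D_def by simp
qed

lemma prox_eqI:
  assumes "subgradient f p (x - p)"
  shows "prox f x = p"
proof -
  have key: "f p + (1/2) * (norm (x - p))\<^sup>2 + (1/2) * (norm (v - p))\<^sup>2
      \<le> f v + (1/2) * (norm (x - v))\<^sup>2" for v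
  proof -
    have "x - v = (x - p) - (v - p)"
      by simp
    then have "(norm (x - v))\<^sup>2 = (norm (x - p))\<^sup>2 - 2 * inner (x - p) (v - p) + (norm (v - p))\<^sup>2"
      by (simp only: power2_norm_diff)
    moreover have "f p + inner (x - p) (v - p) \<le> f v"
      using assms unfolding subgradient_def by blast
    ultimately show ?thesis
      by linarith
  qed
  show ?thesis
    unfolding prox_def
  proof (rule the_equality)
    show "\<forall>v. f p + (1/2) * (norm (x - p))\<^sup>2 \<le> f v + (1/2) * (norm (x - v))\<^sup>2"
    proof
      fix v
      have "0 \<le> (1/2) * (norm (v - p))\<^sup>2"
        by simp
      with key[of v] show "f p + (1/2) * (norm (x - p))\<^sup>2 \<le> f v + (1/2) * (norm (x - v))\<^sup>2"
        by linarith
    qed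
  next
    fix u
    assume "\<forall>v. f u + (1/2) * (norm (x - u))\<^sup>2 \<le> f v + (1/2) * (norm (x - v))\<^sup>2"
    then have "f u + (1/2) * (norm (x - u))\<^sup>2 \<le> f p + (1/2) * (norm (x - p))\<^sup>2"
      by blast
    then have "(norm (u - p))\<^sup>2 \<le> 0"
      using key[of u] by linarith
    then show "u = p"
      by simp
  qed
qed

lemma subgradient_prox:
  fixes f :: "'a::{real_inner, complete_space} \<Rightarrow> real"
  assumes "convex_on UNIV f" and "lsc f"
  shows "subgradient f (prox f x) (x - prox f x)"
proof -
  obtain p where "prox_minimizer f x p"
    using prox_minimizer_exists[OF assms] .
  then have "subgradient f p (x - p)"
    by (rule prox_minimizer_imp_subgradient[OF assms(1)])
  moreover from this have "prox f x = p"
    by (rule prox_eqI)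
  ultimately show ?thesis
    by simp
qed

lemma subgradient_prox_cmul:
  fixes f :: "'a::{real_inner, complete_space} \<Rightarrow> real" and x :: 'a
  assumes "convex_on UNIV f" and "lsc f" and "0 < c"
  defines "p \<equiv> prox (\<lambda>v. c * f v) x"
  shows "subgradient f p (inverse c *\<^sub>R (x - p))"
  unfolding subgradient_def
proof
  fix v
  have "subgradient (\<lambda>v. c * f v) p (x - p)"
    unfolding p_def using assms(1-3)
    by (intro subgradient_prox convex_on_cmul lsc_cmul) auto
  then have "c * f p + inner (x - p) (v - p) \<le> c * f v"
    unfolding subgradient_def by blast
  moreover have "c * (f p + inner (inverse c *\<^sub>R (x - p)) (v - p)) = c * f p + inner (x - p) (v - p)"
    using \<open>0 < c\<close> by (simp add: distrib_left)
  ultimately show "f p + inner (inverse c *\<^sub>R (x - p)) (v - p) \<le> f v"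
    using \<open>0 < c\<close> by (metis mult_le_cancel_left_pos)
qed

lemma subgradient_norm_le_lipschitz:
  assumes "l-lipschitz_on UNIV f" and "subgradient f p g"
  shows "norm g \<le> l"
proof -
  have "(norm g)\<^sup>2 \<le> f (p + g) - f p"
    using assms(2) unfolding subgradient_def power2_norm_eq_inner
    by (metis add_diff_cancel_left' le_diff_eq add.commute)
  also have "\<dots> \<le> l * norm g"
    using lipschitz_onD[OF assms(1), of "p + g" p] by (simp add: dist_norm dist_real_def)
  finally have "norm g * norm g \<le> l * norm g"
    by (simp add: power2_eq_square)
  then show ?thesis
    using lipschitz_on_nonneg[OF assms(1)]
    by (cases "norm g = 0") (auto simp: mult_le_cancel_right_pos)
qed

lemma lipschitz_on_if_subgradients_dense:
  fixes f :: "'a::real_inner \<Rightarrow> real"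
  assumes "lsc f" and "0 \<le> l"
    and dense: "\<And>a \<delta>. 0 < \<delta> \<Longrightarrow> \<exists>p g. dist p a < \<delta> \<and> norm g \<le> l \<and> subgradient f p g"
  shows "l-lipschitz_on UNIV f"
proof -
  have one_sided: "f a - f b \<le> l * dist a b" for a b
  proof (rule field_le_epsilon)
    fix e :: real
    assume "0 < e"
    then have "eventually (\<lambda>y. f a - e / 2 < f y) (nhds a)"
      using \<open>lsc f\<close> unfolding lsc_def by simp
    then obtain \<delta> where "0 < \<delta>" and \<delta>: "\<And>y. dist y a < \<delta> \<Longrightarrow> f a - e / 2 < f y"
      by (auto simp: eventually_nhds_metric)
    define \<delta>' where "\<delta>' = min \<delta> (e / (2 * (l + 1)))"
    have "0 < \<delta>'" and "l * \<delta>' \<le> e / 2"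
      using \<open>0 < \<delta>\<close> \<open>0 < e\<close> \<open>0 \<le> l\<close>
      by (auto simp: \<delta>'_def min_def field_simps mult_left_mono)
    then obtain p g where "dist p a < \<delta>'" and "norm g \<le> l" and "subgradient f p g"
      using dense by blast
    have "f a - e / 2 < f p"
      using \<delta> \<open>dist p a < \<delta>'\<close> by (simp add: \<delta>'_def)
    moreover have "f p \<le> f b + inner g (p - b)"
      using \<open>subgradient f p g\<close> unfolding subgradient_def
      by (metis inner_minus_right minus_diff_eq le_diff_eq diff_minus_eq_add add.commute)
    moreover have "inner g (p - b) \<le> l * dist p b"
      using norm_cauchy_schwarz[of g "p - b"] mult_right_mono[OF \<open>norm g \<le> l\<close>, of "norm (p - b)"]
      by (simp add: dist_norm)
    moreover have "l * dist p b \<le> l * dist a b + e / 2"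
    proof -
      have "dist p b \<le> dist a b + \<delta>'"
        using dist_triangle3[of p b a] \<open>dist p a < \<delta>'\<close> by (simp add: dist_commute)
      then have "l * dist p b \<le> l * dist a b + l * \<delta>'"
        using \<open>0 \<le> l\<close> by (metis distrib_left mult_left_mono)
      then show ?thesis
        using \<open>l * \<delta>' \<le> e / 2\<close> by linarith
    qed
    ultimately show "f a - f b \<le> l * dist a b + e"
      by linarith
  qed
  show ?thesis
  proof (rule lipschitz_onI)
    show "dist (f a) (f b) \<le> l * dist a b" for a b
      using one_sided[of a b] one_sided[of b a] by (simp add: dist_real_def dist_commute abs_le_iff)
  qed (rule \<open>0 \<le> l\<close>)
qed

text \<open>With \<open>p = prox (c f) a\<close> and \<open>g = (a - p) / c\<close> we have \<open>p = prox f (p + g)\<close>, so the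
  residual bound gives \<open>norm g \<le> l\<close> and hence \<open>dist p a \<le> c l\<close>.\<close>
lemma lipschitz_on_if_prox_residual_le:
  fixes f :: "'a::{real_inner, complete_space} \<Rightarrow> real"
  assumes "0 \<le> l" and cvx: "convex_on UNIV f" and "lsc f"
    and residual: "\<And>z. norm (z - prox f z) \<le> l"
  shows "l-lipschitz_on UNIV f"
proof (rule lipschitz_on_if_subgradients_dense[OF \<open>lsc f\<close> \<open>0 \<le> l\<close>])
  fix a :: 'a and \<delta> :: real
  assume "0 < \<delta>"
  define c where "c = \<delta> / (l + 1)"
  have "0 < c" and "c * l < \<delta>"
    using \<open>0 < \<delta>\<close> \<open>0 \<le> l\<close> by (auto simp: c_def field_simps)
  define p where "p = prox (\<lambda>v. c * f v) a"
  define g where "g = inverse c *\<^sub>R (a - p)"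
  have "subgradient f p g"
    unfolding p_def g_def by (rule subgradient_prox_cmul[OF cvx \<open>lsc f\<close> \<open>0 < c\<close>])
  then have "prox f (p + g) = p"
    by (intro prox_eqI) simp
  then have "norm g \<le> l"
    using residual[of "p + g"] by simp
  have "dist p a = c * norm g"
    using \<open>0 < c\<close> by (simp add: g_def dist_norm norm_minus_commute)
  also have "\<dots> < \<delta>"
    using \<open>norm g \<le> l\<close> \<open>0 < c\<close> \<open>c * l < \<delta>\<close> mult_left_mono[of "norm g" l c] by linarith
  finally show "\<exists>p g. dist p a < \<delta> \<and> norm g \<le> l \<and> subgradient f p g"
    using \<open>norm g \<le> l\<close> \<open>subgradient f p g\<close> by blast
qed

lemma prox_residual_le_if_lipschitz_on:
  fixes f :: "'a::{real_inner, complete_space} \<Rightarrow> real"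
  assumes "l-lipschitz_on UNIV f" and "convex_on UNIV f" and "lsc f"
  shows "norm (z - prox f z) \<le> l"
  using subgradient_norm_le_lipschitz[OF assms(1) subgradient_prox[OF assms(2,3)]] .

text \<open>For \<open>\<Longrightarrow>\<close> take \<open>x = 2 (z - P z)\<close> and \<open>y = z - x\<close>.\<close>
lemma norm_shifted_displacement_iff:
  fixes P :: "'a::real_normed_vector \<Rightarrow> 'a"
  shows "(\<forall>x y. norm x - l \<le> norm (P (x + y) - y)) \<longleftrightarrow> (\<forall>z. norm (z - P z) \<le> l)"
proof
  assume shifted: "\<forall>x y. norm x - l \<le> norm (P (x + y) - y)"
  show "\<forall>z. norm (z - P z) \<le> l"
  proof
    fix z
    let ?x = "2 *\<^sub>R (z - P z)"
    have "P (?x + (z - ?x)) - (z - ?x) = z - P z"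
      by (simp add: scaleR_2 algebra_simps)
    then have "norm ?x - l \<le> norm (z - P z)"
      using shifted by metis
    then show "norm (z - P z) \<le> l"
      by simp
  qed
next
  assume residual: "\<forall>z. norm (z - P z) \<le> l"
  show "\<forall>x y. norm x - l \<le> norm (P (x + y) - y)"
  proof (intro allI)
    fix x y
    have "norm x = norm ((x + y - P (x + y)) + (P (x + y) - y))"
      by simp
    also have "\<dots> \<le> norm (x + y - P (x + y)) + norm (P (x + y) - y)"
      by (rule norm_triangle_ineq)
    finally show "norm x - l \<le> norm (P (x + y) - y)"
      using residual[rule_format, of "x + y"] by linarith
  qed
qed

theorem proposition4:
  fixes f :: "'a::{real_inner, complete_space} \<Rightarrow> real" and l :: real
  assumes "0 \<le> l" and "convex_on UNIV f" and "lsc f"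
  shows "l-lipschitz_on UNIV f \<longleftrightarrow>
         (\<forall>x y. norm x - l \<le> norm (prox f (x + y) - y))"
proof -
  have "l-lipschitz_on UNIV f \<longleftrightarrow> (\<forall>z. norm (z - prox f z) \<le> l)"
    using prox_residual_le_if_lipschitz_on[OF _ assms(2,3)]
      lipschitz_on_if_prox_residual_le[OF assms] by blast
  also have "\<dots> \<longleftrightarrow> (\<forall>x y. norm x - l \<le> norm (prox f (x + y) - y))"
    by (rule norm_shifted_displacement_iff[symmetric])
  finally show ?thesis .
qed

end
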